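(* Let $A\subseteq\mathbb{Z}^n$ be finite with $\operatorname{conv}(A)$ of dimension $n$, and let $C_1,\dots,C_k\subseteq[r]$ be the primitive collections of rays of $\Sigma_A$. If $C_1\cup\dots\cup C_k=[r]$, then the preprime $T=\mathbb{R}_{\ge0}[x_1,\dots,x_r]+\langle1-\sum_{i\in C_j}x_i : j\in[k]\rangle\subseteq\mathbb{R}[x_1,\dots,x_r]$ is Archimedean. If moreover $f\in\mathbb{R}[t^{\pm1}]_A$ is strictly $A$-copositive, then there exist $g\in\mathbb{R}_{\ge0}[x_1,\dots,x_r]$ and $g_1,\dots,g_k\in\mathbb{R}[x_1,\dots,x_r]$ with $f_{\mathrm{cox}}=g+\sum_{j=1}^kg_j\big(1-\sum_{i\in C_j}x_i\big)$.
   Context: Cox setup: $\Sigma_A$ inner normal fan of $\operatorname{conv}(A)$ with rays $1,\dots,r$, primitive generators $F_i$ (columns of $F$), $b$ with $\operatorname{conv}(A)=\{a:F^\top a+b\ge0\}$, $f_{\mathrm{cox}}=\sum_ac_ax^{F^\top a+b}$. A primitive collection is a set $C\subseteq[r]$ whose rays do not span a cone of $\Sigma_A$ but every proper subset does. $\mathbb{R}_{\ge0}[x]$ denotes polynomials with nonnegative coefficients. A preprime is a subset closed under addition and multiplication containing $\mathbb{Q}_{\ge0}$; it is Archimedean if for every $h$ there is $N\in\mathbb{N}_{>0}$ with $N\pm h$ in it. Strict $A$-copositivity of $f$ means $f$ lies in the interior of the cone of $g\in\mathbb{R}[t^{\pm1}]_A$ with $g\ge0$ on $\mathbb{R}^n_{>0}$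 (equivalently $\sum_jc_{a_j}y_j>0$ on $Y_{\hat A}\cap\mathbb{R}^m_{\ge0}\setminus\{0\}$, $Y_{\hat A}$ the affine toric variety of $A$). *)

theory Defs
  imports "HOL-Analysis.Analysis" "HOL-Library.Poly_Mapping"
begin

type_synonym rpoly = "(nat \<Rightarrow>\<^sub>0 nat) \<Rightarrow>\<^sub>0 real"

definition pvar :: "nat \<Rightarrow> rpoly" where
  "pvar i = Poly_Mapping.single (Poly_Mapping.single i 1) 1"

definition in_poly_ring :: "nat \<Rightarrow> rpoly \<Rightarrow> bool" where
  "in_poly_ring r p \<longleftrightarrow> (\<forall>m\<in>Poly_Mapping.keys p. Poly_Mapping.keys m \<subseteq> {1..r})"

definition nonneg_coeffs :: "rpoly \<Rightarrow> bool" where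
  "nonneg_coeffs g \<longleftrightarrow> (\<forall>m. Poly_Mapping.lookup g m \<ge> 0)"

definition preprime :: "rpoly set \<Rightarrow> bool" where
  "preprime T \<longleftrightarrow> (\<forall>p\<in>T. \<forall>q\<in>T. p + q \<in> T \<and> p * q \<in> T)
                  \<and> (\<forall>q::rat. q \<ge> 0 \<longrightarrow> Poly_Mapping.single 0 (of_rat q) \<in> T)"

definition archimedean :: "nat \<Rightarrow> rpoly set \<Rightarrow> bool" where
  "archimedean r T \<longleftrightarrow> (\<forall>h. in_poly_ring r h \<longrightarrow> (\<exists>N::nat. N > 0 \<and> of_nat N + h \<in> T \<and> of_nat N - h \<in> T))"

definition rvec :: "int ^ 'n \<Rightarrow> real ^ 'n" where
  "rvec v = (\<chi> j. real_of_int (v $ j))"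

definition idot :: "int ^ 'n \<Rightarrow> int ^ 'n \<Rightarrow> int" where
  "idot u v = (\<Sum>j\<in>UNIV. u $ j * v $ j)"

definition primitive_vec :: "int ^ 'n \<Rightarrow> bool" where
  "primitive_vec u \<longleftrightarrow> Gcd (range (\<lambda>j. u $ j)) = 1"

text \<open>Primitive inner facet normals of a polytope P: the rays of its inner normal fan.\<close>
definition ray_generators :: "(real ^ 'n) set \<Rightarrow> (int ^ 'n) set" where
  "ray_generators P = {u. primitive_vec u \<and>
      {x \<in> P. rvec u \<bullet> x = (INF y\<in>P. rvec u \<bullet> y)} facet_of P}"

definition normal_fan :: "(real ^ 'n) set \<Rightarrow> (real ^ 'n) set set" where
  "normal_fan P = {{u. \<forall>x\<in>Fc. \<forall>y\<in>P. u \<bullet> x \<le> u \<bullet> y} | Fc. Fc face_of P \<and> Fc \<noteq> {}}"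

definition rays_in_cone :: "(real ^ 'n) set \<Rightarrow> (nat \<Rightarrow> int ^ 'n) \<Rightarrow> nat set \<Rightarrow> bool" where
  "rays_in_cone P F S \<longleftrightarrow> (\<exists>\<sigma>\<in>normal_fan P. \<forall>i\<in>S. rvec (F i) \<in> \<sigma>)"

definition primitive_collection ::
  "(real ^ 'n) set \<Rightarrow> nat \<Rightarrow> (nat \<Rightarrow> int ^ 'n) \<Rightarrow> nat set \<Rightarrow> bool" where
  "primitive_collection P r F C \<longleftrightarrow> C \<subseteq> {1..r} \<and> \<not> rays_in_cone P F C
      \<and> (\<forall>C'. C' \<subset> C \<longrightarrow> rays_in_cone P F C')"

text \<open>Offsets b_i, so that conv(A) = {a. F^T a + b \<ge> 0}.\<close>
definition offset :: "(int ^ 'n) set \<Rightarrow> (nat \<Rightarrow> int ^ 'n) \<Rightarrow> nat \<Rightarrow> int" where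
  "offset A F i = - Min ((\<lambda>a. idot (F i) a) ` A)"

definition cox_poly ::
  "(int ^ 'n) set \<Rightarrow> nat \<Rightarrow> (nat \<Rightarrow> int ^ 'n) \<Rightarrow> (int ^ 'n \<Rightarrow> real) \<Rightarrow> rpoly" where
  "cox_poly A r F c = (\<Sum>a\<in>A. Poly_Mapping.single
      (\<Sum>i\<in>{1..r}. Poly_Mapping.single i (nat (idot (F i) a + offset A F i))) (c a))"

definition laurent_eval :: "(int ^ 'n) set \<Rightarrow> (int ^ 'n \<Rightarrow> real) \<Rightarrow> real ^ 'n \<Rightarrow> real" where
  "laurent_eval A c t = (\<Sum>a\<in>A. c a * (\<Prod>j\<in>UNIV. (t $ j) powi (a $ j)))"

text \<open>Strict A-copositivity: the coefficient vector lies in the interior (in R^A) of the cone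
  of coefficient vectors whose Laurent polynomial is nonnegative on the positive orthant.\<close>
definition strictly_A_copositive :: "(int ^ 'n) set \<Rightarrow> (int ^ 'n \<Rightarrow> real) \<Rightarrow> bool" where
  "strictly_A_copositive A c \<longleftrightarrow> (\<exists>\<epsilon>>0. \<forall>d. (\<forall>a\<in>A. \<bar>d a - c a\<bar> < \<epsilon>) \<longrightarrow>
      (\<forall>t. (\<forall>j. t $ j > 0) \<longrightarrow> laurent_eval A d t \<ge> 0))"

end

theory Submission
  imports Defs
begin

text \<open>Each \<open>i\<close> lies in some primitive collection \<open>C\<close>, and \<open>1 - x_i\<close> is the sum of the
  \<open>x_l\<close> with \<open>l \<in> C - {i}\<close> plus the generator \<open>1 - \<Sum>l\<in>C. x_l\<close>; so \<open>T\<close> is a preprime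
  containing every \<open>x_i\<close> and \<open>1 - x_i\<close>. Hence every polynomial is bounded with respect to
  \<open>T\<close>, which is therefore Archimedean, and by Bernstein's theorem every polynomial that is
  positive on the unit box \<open>[0,1]^r\<close> lies in \<open>T\<close>.

  If \<open>f\<close> is strictly copositive, \<open>f_cox\<close> is positive at every point \<open>x\<close> of the box that
  satisfies the relations \<open>\<Sum>i\<in>C. x_i = 1\<close>: the coordinates vanishing at \<open>x\<close> contain no
  primitive collection, so their rays lie in a cone of the normal fan, and a vertex \<open>a_0\<close> of
  the corresponding face gives a monomial of \<open>f_cox\<close> that does not vanish at \<open>x\<close>. Adding a
  large multiple of \<open>\<Sum>C. (1 - \<Sum>i\<in>C. x_i)^2\<close>, which lies in the ideal part of \<open>T\<close>,
  makes \<open>f_cox\<close> positive on the whole box.\<close>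

section \<open>Polynomials and their evaluation\<close>

definition pconst :: "real \<Rightarrow> rpoly" where
  "pconst c = Poly_Mapping.single 0 c"

lemma pconst_add: "pconst (a + b) = pconst a + pconst b"
  by (simp add: pconst_def single_add)

lemma pconst_mult: "pconst (a * b) = pconst a * pconst b"
  by (simp add: pconst_def mult_single)

lemma pconst_diff: "pconst (a - b) = pconst a - pconst b"
  by (simp add: pconst_def single_diff)

lemma pconst_0 [simp]: "pconst 0 = 0"
  by (simp add: pconst_def)

lemma pconst_1 [simp]: "pconst 1 = 1"
  by (simp add: pconst_def)

lemma of_nat_eq_pconst: "(of_nat n :: rpoly) = pconst (of_nat n)"
  by (simp add: pconst_def)

lemma pconst_sum: "pconst (sum f I) = (\<Sum>i\<in>I. pconst (f i))"
  by (induction I rule: infinite_finite_induct) (auto simp: pconst_add)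

lemma pconst_prod: "pconst (prod f I) = (\<Prod>i\<in>I. pconst (f i))"
  by (induction I rule: infinite_finite_induct) (auto simp: pconst_mult)

lemma single_eq_pconst_mult: "Poly_Mapping.single m c = pconst c * Poly_Mapping.single m 1"
  by (simp add: pconst_def mult_single)

lemma poly_mapping_eq_sum_single:
  fixes p :: "'a \<Rightarrow>\<^sub>0 'b::comm_monoid_add"
  assumes "finite S" "Poly_Mapping.keys p \<subseteq> S"
  shows "p = (\<Sum>m\<in>S. Poly_Mapping.single m (Poly_Mapping.lookup p m))"
proof (rule poly_mapping_eqI)
  fix k
  have "(\<Sum>m\<in>S. Poly_Mapping.lookup (Poly_Mapping.single m (Poly_Mapping.lookup p m)) k)
      = (\<Sum>m\<in>S. if m = k then Poly_Mapping.lookup p m else 0)"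
    by (rule sum.cong) (auto simp: lookup_single)
  also have "\<dots> = Poly_Mapping.lookup p k"
    using assms by (auto simp: sum.delta in_keys_iff)
  finally show "Poly_Mapping.lookup p k =
      Poly_Mapping.lookup (\<Sum>m\<in>S. Poly_Mapping.single m (Poly_Mapping.lookup p m)) k"
    by (simp add: lookup_sum)
qed

lemma poly_mapping_eq_sum_keys:
  fixes p :: "'a \<Rightarrow>\<^sub>0 'b::comm_monoid_add"
  shows "p = (\<Sum>m\<in>Poly_Mapping.keys p. Poly_Mapping.single m (Poly_Mapping.lookup p m))"
  by (rule poly_mapping_eq_sum_single) auto

lemma lookup_sum_single:
  "finite I \<Longrightarrow>
    Poly_Mapping.lookup (\<Sum>i\<in>I. Poly_Mapping.single i (g i)) j = (if j \<in> I then g j else (0::nat))"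
  by (simp add: lookup_sum lookup_single when_def sum.delta)

lemma pvar_power: "pvar i ^ k = Poly_Mapping.single (Poly_Mapping.single i k) 1"
  by (induction k) (auto simp: pvar_def mult_single single_add[symmetric] add.commute)

lemma prod_single_one:
  "finite I \<Longrightarrow>
    (\<Prod>i\<in>I. Poly_Mapping.single (g i) (1::real)) = Poly_Mapping.single (\<Sum>i\<in>I. g i) 1"
  by (induction I rule: finite_induct) (auto simp: mult_single)

lemma prod_pvar_power_eq_single:
  assumes "finite I" "Poly_Mapping.keys m \<subseteq> I"
  shows "(\<Prod>i\<in>I. pvar i ^ Poly_Mapping.lookup m i) = Poly_Mapping.single m 1"
  using poly_mapping_eq_sum_single[OF assms]
  by (simp add: pvar_power prod_single_one assms(1))

lemma poly_eq_sum_monomials: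
  assumes "in_poly_ring r p"
  shows "p = (\<Sum>\<alpha>\<in>Poly_Mapping.keys p.
      pconst (Poly_Mapping.lookup p \<alpha>) * (\<Prod>i\<in>{1..r}. pvar i ^ Poly_Mapping.lookup \<alpha> i))"
proof -
  have "Poly_Mapping.single \<alpha> (Poly_Mapping.lookup p \<alpha>) =
      pconst (Poly_Mapping.lookup p \<alpha>) * (\<Prod>i\<in>{1..r}. pvar i ^ Poly_Mapping.lookup \<alpha> i)"
    if "\<alpha> \<in> Poly_Mapping.keys p" for \<alpha>
  proof -
    have "Poly_Mapping.keys \<alpha> \<subseteq> {1..r}"
      using that assms by (simp add: in_poly_ring_def)
    then show ?thesis
      by (subst single_eq_pconst_mult) (simp only: prod_pvar_power_eq_single finite_atLeastAtMost)
  qed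
  then have "(\<Sum>\<alpha>\<in>Poly_Mapping.keys p. Poly_Mapping.single \<alpha> (Poly_Mapping.lookup p \<alpha>)) =
      (\<Sum>\<alpha>\<in>Poly_Mapping.keys p.
      pconst (Poly_Mapping.lookup p \<alpha>) * (\<Prod>i\<in>{1..r}. pvar i ^ Poly_Mapping.lookup \<alpha> i))"
    by (rule sum.cong[OF refl])
  then show ?thesis
    using poly_mapping_eq_sum_keys[of p] by simp
qed

definition monom_eval :: "(nat \<Rightarrow> real) \<Rightarrow> (nat \<Rightarrow>\<^sub>0 nat) \<Rightarrow> real" where
  "monom_eval x m = (\<Prod>i\<in>Poly_Mapping.keys m. x i ^ Poly_Mapping.lookup m i)"

definition peval :: "(nat \<Rightarrow> real) \<Rightarrow> rpoly \<Rightarrow> real" where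
  "peval x p = (\<Sum>m\<in>Poly_Mapping.keys p. Poly_Mapping.lookup p m * monom_eval x m)"

lemma monom_eval_superset:
  assumes "finite S" "Poly_Mapping.keys m \<subseteq> S"
  shows "monom_eval x m = (\<Prod>i\<in>S. x i ^ Poly_Mapping.lookup m i)"
  unfolding monom_eval_def
  by (rule prod.mono_neutral_left) (use assms in \<open>auto simp: in_keys_iff\<close>)

lemma peval_superset:
  assumes "finite S" "Poly_Mapping.keys p \<subseteq> S"
  shows "peval x p = (\<Sum>m\<in>S. Poly_Mapping.lookup p m * monom_eval x m)"
  unfolding peval_def
  by (rule sum.mono_neutral_left) (use assms in \<open>auto simp: in_keys_iff\<close>)

lemma monom_eval_add: "monom_eval x (m + m') = monom_eval x m * monom_eval x m'"
proof -
  let ?S = "Poly_Mapping.keys m \<union> Poly_Mapping.keys m'"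
  have "monom_eval x (m + m') = (\<Prod>i\<in>?S. x i ^ Poly_Mapping.lookup (m + m') i)"
    by (rule monom_eval_superset) (auto simp: in_keys_iff lookup_add)
  also have "\<dots> = (\<Prod>i\<in>?S. x i ^ Poly_Mapping.lookup m i) * (\<Prod>i\<in>?S. x i ^ Poly_Mapping.lookup m' i)"
    by (simp add: lookup_add power_add prod.distrib)
  also have "\<dots> = monom_eval x m * monom_eval x m'"
    by (subst (1 2) monom_eval_superset[of ?S]) auto
  finally show ?thesis .
qed

lemma peval_0 [simp]: "peval x 0 = 0"
  by (simp add: peval_def)

lemma peval_single: "peval x (Poly_Mapping.single m c) = c * monom_eval x m"
  by (simp add: peval_def)

lemma peval_add: "peval x (p + q) = peval x p + peval x q"
proof -
  let ?S = "Poly_Mapping.keys p \<union> Poly_Mapping.keys q"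
  have "peval x (p + q) = (\<Sum>m\<in>?S. Poly_Mapping.lookup (p + q) m * monom_eval x m)"
    by (rule peval_superset) (auto simp: in_keys_iff lookup_add)
  also have "\<dots> = (\<Sum>m\<in>?S. Poly_Mapping.lookup p m * monom_eval x m)
      + (\<Sum>m\<in>?S. Poly_Mapping.lookup q m * monom_eval x m)"
    by (simp add: lookup_add distrib_right sum.distrib)
  also have "\<dots> = peval x p + peval x q"
    by (subst (1 2) peval_superset[of ?S]) auto
  finally show ?thesis .
qed

lemma peval_sum: "peval x (sum f I) = (\<Sum>i\<in>I. peval x (f i))"
  by (induction I rule: infinite_finite_induct) (auto simp: peval_add)

lemma mult_eq_sum_single:
  "p * q = (\<Sum>m\<in>Poly_Mapping.keys p. \<Sum>m'\<in>Poly_Mapping.keys q.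
       Poly_Mapping.single (m + m') (Poly_Mapping.lookup p m * Poly_Mapping.lookup q m' :: real))"
proof -
  have "p * q = (\<Sum>m\<in>Poly_Mapping.keys p. Poly_Mapping.single m (Poly_Mapping.lookup p m)) *
                (\<Sum>m\<in>Poly_Mapping.keys q. Poly_Mapping.single m (Poly_Mapping.lookup q m))"
    by (subst (1) poly_mapping_eq_sum_keys[of p], subst (1) poly_mapping_eq_sum_keys[of q]) (rule refl)
  then show ?thesis
    by (simp add: sum_product mult_single)
qed

lemma peval_mult: "peval x (p * q) = peval x p * peval x q"
proof -
  have "peval x (p * q) = (\<Sum>m\<in>Poly_Mapping.keys p. \<Sum>m'\<in>Poly_Mapping.keys q.
       (Poly_Mapping.lookup p m * monom_eval x m) * (Poly_Mapping.lookup q m' * monom_eval x m'))"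
    by (subst mult_eq_sum_single) (simp add: peval_sum peval_single monom_eval_add mult_ac)
  also have "\<dots> = peval x p * peval x q"
    by (simp add: peval_def sum_product)
  finally show ?thesis .
qed

lemma peval_pconst [simp]: "peval x (pconst c) = c"
  by (simp add: pconst_def peval_single monom_eval_def)

lemma peval_1 [simp]: "peval x 1 = 1"
  using peval_pconst[of x 1] by simp

lemma peval_uminus: "peval x (- p) = - peval x p"
  by (simp add: peval_def keys_def sum_negf[symmetric])

lemma peval_diff: "peval x (p - q) = peval x p - peval x q"
  using peval_add[of x p "- q"] by (simp add: peval_uminus)

lemma peval_pvar [simp]: "peval x (pvar i) = x i"
  by (simp add: pvar_def peval_single monom_eval_def)

lemma in_poly_ring_add: "in_poly_ring r p \<Longrightarrow> in_poly_ring r q \<Longrightarrow> in_poly_ring r (p + q)"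
  unfolding in_poly_ring_def by (meson UnE keys_add subsetD)

lemma in_poly_ring_mult: "in_poly_ring r p \<Longrightarrow> in_poly_ring r q \<Longrightarrow> in_poly_ring r (p * q)"
  unfolding in_poly_ring_def
proof
  fix m assume p: "\<forall>m\<in>Poly_Mapping.keys p. Poly_Mapping.keys m \<subseteq> {1..r}"
    and q: "\<forall>m\<in>Poly_Mapping.keys q. Poly_Mapping.keys m \<subseteq> {1..r}"
    and "m \<in> Poly_Mapping.keys (p * q)"
  then obtain a b where "m = a + b" "a \<in> Poly_Mapping.keys p" "b \<in> Poly_Mapping.keys q"
    using keys_mult by blast
  with p q show "Poly_Mapping.keys m \<subseteq> {1..r}"
    by (meson UnE keys_add subsetD subsetI)
qed

lemma in_poly_ring_uminus: "in_poly_ring r p \<Longrightarrow> in_poly_ring r (- p)"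
  unfolding in_poly_ring_def by (simp add: keys_def)

lemma in_poly_ring_diff: "in_poly_ring r p \<Longrightarrow> in_poly_ring r q \<Longrightarrow> in_poly_ring r (p - q)"
  using in_poly_ring_add[of r p "- q"] in_poly_ring_uminus[of r q] by simp

lemma in_poly_ring_pconst: "in_poly_ring r (pconst c)"
  unfolding in_poly_ring_def pconst_def by auto

lemma in_poly_ring_0: "in_poly_ring r 0"
  using in_poly_ring_pconst[of r 0] by simp

lemma in_poly_ring_1: "in_poly_ring r 1"
  using in_poly_ring_pconst[of r 1] by simp

lemma in_poly_ring_pvar: "i \<in> {1..r} \<Longrightarrow> in_poly_ring r (pvar i)"
  unfolding in_poly_ring_def pvar_def by auto

lemma in_poly_ring_single: "Poly_Mapping.keys m \<subseteq> {1..r} \<Longrightarrow> in_poly_ring r (Poly_Mapping.single m c)"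
  unfolding in_poly_ring_def by auto

lemma in_poly_ring_sum: "(\<And>i. i \<in> I \<Longrightarrow> in_poly_ring r (f i)) \<Longrightarrow> in_poly_ring r (sum f I)"
  by (induction I rule: infinite_finite_induct) (auto intro: in_poly_ring_add in_poly_ring_0)

lemma nonneg_coeffs_add: "nonneg_coeffs p \<Longrightarrow> nonneg_coeffs q \<Longrightarrow> nonneg_coeffs (p + q)"
  unfolding nonneg_coeffs_def by (simp add: lookup_add)

lemma nonneg_coeffs_mult: "nonneg_coeffs p \<Longrightarrow> nonneg_coeffs q \<Longrightarrow> nonneg_coeffs (p * q)"
  unfolding nonneg_coeffs_def
  by (subst mult_eq_sum_single) (auto simp: lookup_sum lookup_single when_def intro!: sum_nonneg)

lemma nonneg_coeffs_pvar: "nonneg_coeffs (pvar i)"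
  unfolding nonneg_coeffs_def pvar_def by (auto simp: lookup_single when_def)

lemma nonneg_coeffs_0: "nonneg_coeffs 0"
  by (simp add: nonneg_coeffs_def)

lemma nonneg_coeffs_sum: "(\<And>i. i \<in> I \<Longrightarrow> nonneg_coeffs (f i)) \<Longrightarrow> nonneg_coeffs (sum f I)"
  by (induction I rule: infinite_finite_induct) (auto intro: nonneg_coeffs_add nonneg_coeffs_0)

section \<open>Preprimes containing the generators of the unit box\<close>

locale box_preprime =
  fixes r :: nat and S :: "rpoly set"
  assumes add_mem: "p \<in> S \<Longrightarrow> q \<in> S \<Longrightarrow> p + q \<in> S"
    and mult_mem: "p \<in> S \<Longrightarrow> q \<in> S \<Longrightarrow> p * q \<in> S"
    and pconst_mem: "c \<ge> 0 \<Longrightarrow> pconst c \<in> S"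
    and pvar_mem: "i \<in> {1..r} \<Longrightarrow> pvar i \<in> S"
    and one_minus_pvar_mem: "i \<in> {1..r} \<Longrightarrow> 1 - pvar i \<in> S"
begin

lemma zero_mem: "0 \<in> S"
  using pconst_mem[of 0] by simp

lemma one_mem: "1 \<in> S"
  using pconst_mem[of 1] by simp

lemma sum_mem: "(\<And>i. i \<in> I \<Longrightarrow> f i \<in> S) \<Longrightarrow> sum f I \<in> S"
  by (induction I rule: infinite_finite_induct) (auto intro: add_mem zero_mem)

lemma prod_mem: "(\<And>i. i \<in> I \<Longrightarrow> f i \<in> S) \<Longrightarrow> prod f I \<in> S"
  by (induction I rule: infinite_finite_induct) (auto intro: mult_mem one_mem)

lemma power_mem: "p \<in> S \<Longrightarrow> p ^ k \<in> S"
  by (induction k) (auto intro: mult_mem one_mem)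

lemma preprime: "preprime S"
  unfolding preprime_def using add_mem mult_mem pconst_mem by (auto simp: pconst_def)

definition preprime_bounded :: "rpoly \<Rightarrow> bool" where
  "preprime_bounded h \<longleftrightarrow> (\<exists>N::nat. N > 0 \<and> of_nat N + h \<in> S \<and> of_nat N - h \<in> S)"

lemma preprime_bounded_pconst: "preprime_bounded (pconst c)"
proof -
  define N where "N = nat \<lceil>\<bar>c\<bar>\<rceil> + 1"
  have N: "real N \<ge> \<bar>c\<bar>" "N > 0"
    unfolding N_def by linarith+
  have "of_nat N + pconst c = pconst (real N + c)" "of_nat N - pconst c = pconst (real N - c)"
    by (simp_all add: of_nat_eq_pconst pconst_add pconst_diff)
  with N show ?thesis
    unfolding preprime_bounded_def by (intro exI[of _ N]) (auto intro!: pconst_mem)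
qed

lemma preprime_bounded_pvar:
  assumes "i \<in> {1..r}"
  shows "preprime_bounded (pvar i)"
proof -
  have "1 + pvar i \<in> S" "1 - pvar i \<in> S"
    using assms by (auto intro!: add_mem one_mem pvar_mem one_minus_pvar_mem)
  then show ?thesis
    unfolding preprime_bounded_def by (intro exI[of _ 1]) auto
qed

lemma preprime_bounded_add:
  "preprime_bounded a \<Longrightarrow> preprime_bounded b \<Longrightarrow> preprime_bounded (a + b)"
proof -
  assume "preprime_bounded a" "preprime_bounded b"
  then obtain N M :: nat where H: "N > 0" "of_nat N + a \<in> S" "of_nat N - a \<in> S"
    "M > 0" "of_nat M + b \<in> S" "of_nat M - b \<in> S"
    unfolding preprime_bounded_def by blast
  have "of_nat (N + M) + (a + b) = (of_nat N + a) + (of_nat M + b :: rpoly)"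
    "of_nat (N + M) - (a + b) = (of_nat N - a) + (of_nat M - b :: rpoly)"
    by (simp_all add: algebra_simps)
  with H have "of_nat (N + M) + (a + b) \<in> S" "of_nat (N + M) - (a + b) \<in> S"
    by (metis add_mem)+
  with H show ?thesis
    unfolding preprime_bounded_def by (intro exI[of _ "N + M"]) auto
qed

lemma preprime_bounded_mult:
  "preprime_bounded a \<Longrightarrow> preprime_bounded b \<Longrightarrow> preprime_bounded (a * b)"
proof -
  assume "preprime_bounded a" "preprime_bounded b"
  then obtain N M :: nat where H: "N > 0" "of_nat N + a \<in> S" "of_nat N - a \<in> S"
    "M > 0" "of_nat M + b \<in> S" "of_nat M - b \<in> S"
    unfolding preprime_bounded_def by blast
  have half: "p = pconst (1/2) * (2 * p)" for p
    using pconst_mult[of "1/2" 2] by (simp add: pconst_def mult.assoc[symmetric])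
  have "2 * (of_nat (N * M) + a * b) = (of_nat N + a) * (of_nat M + b) + (of_nat N - a) * (of_nat M - b)"
    "2 * (of_nat (N * M) - a * b) = (of_nat N + a) * (of_nat M - b) + (of_nat N - a) * (of_nat M + b)"
    by (simp_all add: algebra_simps)
  moreover have "pconst (1/2) \<in> S"
    by (rule pconst_mem) simp
  ultimately have "of_nat (N * M) + a * b \<in> S" "of_nat (N * M) - a * b \<in> S"
    using H by (metis half add_mem mult_mem)+
  with H show ?thesis
    unfolding preprime_bounded_def by (intro exI[of _ "N * M"]) auto
qed

lemma preprime_bounded_sum:
  "(\<And>i. i \<in> I \<Longrightarrow> preprime_bounded (f i)) \<Longrightarrow> preprime_bounded (sum f I)"
  by (induction I rule: infinite_finite_induct)
    (auto intro: preprime_bounded_add preprime_bounded_pconst[of 0, simplified])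

lemma preprime_bounded_prod:
  "(\<And>i. i \<in> I \<Longrightarrow> preprime_bounded (f i)) \<Longrightarrow> preprime_bounded (prod f I)"
  by (induction I rule: infinite_finite_induct)
    (auto intro: preprime_bounded_mult preprime_bounded_pconst[of 1, simplified])

lemma preprime_bounded_power: "preprime_bounded a \<Longrightarrow> preprime_bounded (a ^ k)"
  by (induction k) (auto intro: preprime_bounded_mult preprime_bounded_pconst[of 1, simplified])

theorem archimedean: "archimedean r S"
  unfolding archimedean_def
proof (intro allI impI)
  fix h assume "in_poly_ring r h"
  then have "preprime_bounded h"
    by (subst poly_eq_sum_monomials)
      (auto intro!: preprime_bounded_sum preprime_bounded_mult preprime_bounded_pconst
        preprime_bounded_prod preprime_bounded_power preprime_bounded_pvar)
  then show "\<exists>N. 0 < N \<and> of_nat N + h \<in> S \<and> of_nat N - h \<in> S"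
    unfolding preprime_bounded_def .
qed

end

section \<open>Bernstein expansions on the unit box\<close>

definition bernstein_coeff :: "nat \<Rightarrow> nat \<Rightarrow> nat \<Rightarrow> nat" where
  "bernstein_coeff d k j = (if k \<le> j then (d - k) choose (j - k) else 0)"

lemma power_eq_bernstein_sum:
  fixes y :: "'a::comm_ring_1"
  assumes "k \<le> d"
  shows "y ^ k = (\<Sum>j\<in>{0..d}. of_nat (bernstein_coeff d k j) * (y ^ j * (1 - y) ^ (d - j)))"
proof -
  have "y ^ k = y ^ k * (y + (1 - y)) ^ (d - k)"
    by simp
  also have "\<dots> = (\<Sum>l\<in>{0..d-k}. of_nat ((d-k) choose l) * (y ^ (l + k) * (1-y) ^ (d - (l + k))))"
    unfolding binomial_ring sum_distrib_left atLeast0AtMost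
    by (rule sum.cong) (auto simp: power_add mult_ac add.commute)
  also have "\<dots> = (\<Sum>l\<in>{0..d-k}. of_nat (bernstein_coeff d k (l + k)) * (y ^ (l + k) * (1-y) ^ (d - (l + k))))"
    by (rule sum.cong) (auto simp: bernstein_coeff_def)
  also have "\<dots> = (\<Sum>j\<in>{0+k..d-k+k}. of_nat (bernstein_coeff d k j) * (y ^ j * (1 - y) ^ (d - j)))"
    by (rule sum.shift_bounds_cl_nat_ivl[symmetric])
  also have "\<dots> = (\<Sum>j\<in>{0..d}. of_nat (bernstein_coeff d k j) * (y ^ j * (1 - y) ^ (d - j)))"
    using assms by (intro sum.mono_neutral_left) (auto simp: bernstein_coeff_def)
  finally show ?thesis .
qed

definition bernstein_poly :: "nat \<Rightarrow> nat \<Rightarrow> (nat \<Rightarrow> nat) \<Rightarrow> rpoly" where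
  "bernstein_poly r d J = (\<Prod>i\<in>{1..r}. pvar i ^ J i * (1 - pvar i) ^ (d - J i))"

lemma prod_pvar_power_eq_bernstein_sum:
  assumes "\<And>i. i \<in> {1..r} \<Longrightarrow> k i \<le> d"
  shows "(\<Prod>i\<in>{1..r}. pvar i ^ k i) = (\<Sum>J\<in>PiE {1..r} (\<lambda>_. {0..d}).
      pconst (\<Prod>i\<in>{1..r}. real (bernstein_coeff d (k i) (J i))) * bernstein_poly r d J)"
proof -
  have "(\<Prod>i\<in>{1..r}. pvar i ^ k i) = (\<Prod>i\<in>{1..r}. \<Sum>j\<in>{0..d}.
      of_nat (bernstein_coeff d (k i) j) * (pvar i ^ j * (1 - pvar i) ^ (d - j)))"
    using assms by (intro prod.cong refl power_eq_bernstein_sum)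
  also have "\<dots> = (\<Sum>J\<in>PiE {1..r} (\<lambda>_. {0..d}). \<Prod>i\<in>{1..r}.
      of_nat (bernstein_coeff d (k i) (J i)) * (pvar i ^ J i * (1 - pvar i) ^ (d - J i)))"
    by (rule prod_sum_PiE) auto
  also have "\<dots> = (\<Sum>J\<in>PiE {1..r} (\<lambda>_. {0..d}).
      pconst (\<Prod>i\<in>{1..r}. real (bernstein_coeff d (k i) (J i))) * bernstein_poly r d J)"
    by (simp add: prod.distrib of_nat_eq_pconst pconst_prod bernstein_poly_def)
  finally show ?thesis .
qed

definition falling_ratio :: "nat \<Rightarrow> nat \<Rightarrow> nat \<Rightarrow> real" where
  "falling_ratio d k j = (\<Prod>l<k. (real j - real l) / (real d - real l))"

lemma bernstein_coeff_eq_choose_mult_falling_ratio: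
  assumes "k \<le> d" "j \<le> d"
  shows "real (bernstein_coeff d k j) = real (d choose j) * falling_ratio d k j"
proof (cases "k \<le> j")
  case True
  have "falling_ratio d k j = (\<Prod>l<k. (real (j - l) / (real k - real l)) / (real (d - l) / (real k - real l)))"
    unfolding falling_ratio_def
    by (rule prod.cong[OF refl]) (use True assms in \<open>auto simp: of_nat_diff\<close>)
  also have "\<dots> = (\<Prod>l<k. real (j - l) / (real k - real l)) / (\<Prod>l<k. real (d - l) / (real k - real l))"
    by (rule prod_dividef)
  also have "\<dots> = real (j choose k) / real (d choose k)"
    using binomial_altdef_of_nat[OF True, where 'a=real]
      binomial_altdef_of_nat[OF assms(1), where 'a=real]
    by (simp add: lessThan_atLeast0)
  finally have "real (d choose j) * falling_ratio d k j
      = real ((d choose j) * (j choose k)) / real (d choose k)"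
    by simp
  also have "\<dots> = real ((d - k) choose (j - k))"
    unfolding choose_mult[OF True assms(2)] using assms by simp
  finally show ?thesis
    using True by (simp add: bernstein_coeff_def)
next
  case False
  then have "falling_ratio d k j = 0"
    unfolding falling_ratio_def by (intro prod_zero) auto
  with False show ?thesis
    by (simp add: bernstein_coeff_def)
qed

lemma falling_ratio_Suc:
  "falling_ratio d (Suc k) j = falling_ratio d k j * ((real j - real k) / (real d - real k))"
  by (simp add: falling_ratio_def)

lemma fraction_shift_bounds:
  fixes j k d :: real
  assumes "0 \<le> k" "k \<le> j" "j \<le> d" "k < d"
  shows "0 \<le> (j - k) / (d - k)" "(j - k) / (d - k) \<le> j / d" "j / d - (j - k) / (d - k) \<le> k / d"
proof -
  have eq: "j / d - (j - k) / (d - k) = k * (d - j) / (d * (d - k))"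
    using assms by (simp add: field_simps)
  have "k * (d - j) / (d * (d - k)) \<le> k * (d - k) / (d * (d - k))"
    using assms by (intro divide_right_mono mult_left_mono) auto
  with eq assms show "j / d - (j - k) / (d - k) \<le> k / d"
    by simp
  have "0 \<le> k * (d - j) / (d * (d - k))"
    using assms by simp
  with eq show "(j - k) / (d - k) \<le> j / d"
    by simp
  show "0 \<le> (j - k) / (d - k)"
    using assms by simp
qed

lemma falling_ratio_bounds:
  assumes "k \<le> d" "j \<le> d" "0 < d"
  shows "0 \<le> falling_ratio d k j \<and> falling_ratio d k j \<le> (real j / real d) ^ k \<and>
         (real j / real d) ^ k - falling_ratio d k j \<le> real k ^ 2 / real d"
  using assms(1)
proof (induction k)
  case 0
  then show ?case
    by (simp add: falling_ratio_def)
next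
  case (Suc k)
  let ?e = "real j / real d"
  have IH: "0 \<le> falling_ratio d k j" "falling_ratio d k j \<le> ?e ^ k"
    "?e ^ k - falling_ratio d k j \<le> real k ^ 2 / real d"
    using Suc by auto
  have e01: "0 \<le> ?e" "?e \<le> 1" "?e ^ k \<le> 1"
    using assms by (auto intro: power_le_one)
  show ?case
  proof (cases "k \<le> j")
    case False
    then have "falling_ratio d (Suc k) j = 0"
      unfolding falling_ratio_def by (intro prod_zero) auto
    moreover have "?e ^ Suc k \<le> ?e"
      using mult_left_le[OF e01(3) e01(1)] by simp
    moreover have "?e \<le> real (Suc k) ^ 2 / real d"
    proof -
      have "j \<le> Suc k ^ 2"
        using False le_square[of "Suc k"] by (simp add: power2_eq_square)
      then have "real j \<le> real (Suc k) ^ 2"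
        by (metis of_nat_le_iff of_nat_power)
      then show ?thesis
        by (simp add: divide_right_mono)
    qed
    ultimately show ?thesis
      using e01 by simp
  next
    case True
    let ?f = "(real j - real k) / (real d - real k)"
    have f: "0 \<le> ?f" "?f \<le> ?e" "?e - ?f \<le> real k / real d"
      using fraction_shift_bounds[of "real k" "real j" "real d"] True Suc assms by auto
    have "?e ^ Suc k - falling_ratio d k j * ?f = ?e ^ k * (?e - ?f) + ?f * (?e ^ k - falling_ratio d k j)"
      by (simp add: algebra_simps)
    also have "\<dots> \<le> 1 * (real k / real d) + 1 * (real k ^ 2 / real d)"
      using f IH e01 by (intro add_mono mult_mono) auto
    also have "\<dots> \<le> real (Suc k) ^ 2 / real d"
      using assms by (simp add: field_simps power2_eq_square)
    finally have "?e ^ Suc k - falling_ratio d k j * ?f \<le> real (Suc k) ^ 2 / real d" .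
    moreover have "0 \<le> falling_ratio d k j * ?f" "falling_ratio d k j * ?f \<le> ?e ^ k * ?e"
      using IH(1,2) f(1,2) e01(1) by (intro mult_nonneg_nonneg mult_mono; simp)+
    ultimately show ?thesis
      by (simp add: falling_ratio_Suc mult.commute)
  qed
qed

lemma abs_prod_diff_le_sum:
  fixes a b :: "'i \<Rightarrow> real"
  assumes "\<And>i. i \<in> I \<Longrightarrow> 0 \<le> a i \<and> a i \<le> 1 \<and> 0 \<le> b i \<and> b i \<le> 1"
  shows "\<bar>prod a I - prod b I\<bar> \<le> (\<Sum>i\<in>I. \<bar>a i - b i\<bar>)"
  using assms
proof (induction I rule: infinite_finite_induct)
  case (insert x F)
  have A: "0 \<le> prod a F" "prod a F \<le> 1" and B: "\<bar>b x\<bar> \<le> 1"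
    using insert by (auto intro: prod_nonneg prod_le_1)
  have "\<bar>prod a (insert x F) - prod b (insert x F)\<bar> = \<bar>(a x - b x) * prod a F + b x * (prod a F - prod b F)\<bar>"
    using insert by (simp add: algebra_simps)
  also have "\<dots> \<le> \<bar>a x - b x\<bar> * \<bar>prod a F\<bar> + \<bar>b x\<bar> * \<bar>prod a F - prod b F\<bar>"
    by (metis abs_mult abs_triangle_ineq)
  also have "\<dots> \<le> \<bar>a x - b x\<bar> * 1 + 1 * (\<Sum>i\<in>F. \<bar>a i - b i\<bar>)"
    using A B insert by (intro add_mono mult_mono) auto
  finally show ?case
    using insert by simp
qed auto

lemma exponents_bounded:
  "\<exists>D. \<forall>\<alpha>\<in>Poly_Mapping.keys (p :: rpoly). \<forall>i. Poly_Mapping.lookup \<alpha> i \<le> D"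
proof (intro exI ballI allI)
  fix \<alpha> i assume \<alpha>: "\<alpha> \<in> Poly_Mapping.keys p"
  show "Poly_Mapping.lookup \<alpha> i \<le> (\<Sum>\<alpha>\<in>Poly_Mapping.keys p. \<Sum>i\<in>Poly_Mapping.keys \<alpha>. Poly_Mapping.lookup \<alpha> i)"
  proof (cases "i \<in> Poly_Mapping.keys \<alpha>")
    case True
    have "Poly_Mapping.lookup \<alpha> i \<le> (\<Sum>i\<in>Poly_Mapping.keys \<alpha>. Poly_Mapping.lookup \<alpha> i)"
      using True by (intro member_le_sum) auto
    also have "\<dots> \<le> (\<Sum>\<alpha>\<in>Poly_Mapping.keys p. \<Sum>i\<in>Poly_Mapping.keys \<alpha>. Poly_Mapping.lookup \<alpha> i)"
      using \<alpha> by (intro member_le_sum) auto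
    finally show ?thesis .
  qed (simp add: in_keys_iff)
qed

definition bernstein_value :: "nat \<Rightarrow> nat \<Rightarrow> rpoly \<Rightarrow> (nat \<Rightarrow> nat) \<Rightarrow> real" where
  "bernstein_value r d p J = (\<Sum>\<alpha>\<in>Poly_Mapping.keys p. Poly_Mapping.lookup p \<alpha> *
      (\<Prod>i\<in>{1..r}. falling_ratio d (Poly_Mapping.lookup \<alpha> i) (J i)))"

lemma bernstein_expansion:
  assumes p: "in_poly_ring r p" and deg: "\<And>\<alpha> i. \<alpha> \<in> Poly_Mapping.keys p \<Longrightarrow> Poly_Mapping.lookup \<alpha> i \<le> d"
  shows "p = (\<Sum>J\<in>PiE {1..r} (\<lambda>_. {0..d}).
      pconst ((\<Prod>i\<in>{1..r}. real (d choose J i)) * bernstein_value r d p J) * bernstein_poly r d J)"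
proof -
  let ?PI = "PiE {1..r} (\<lambda>_::nat. {0..d})"
  let ?c = "\<lambda>\<alpha>. Poly_Mapping.lookup p \<alpha>"
  have coeff: "(\<Prod>i\<in>{1..r}. real (bernstein_coeff d (Poly_Mapping.lookup \<alpha> i) (J i))) =
      (\<Prod>i\<in>{1..r}. real (d choose J i)) * (\<Prod>i\<in>{1..r}. falling_ratio d (Poly_Mapping.lookup \<alpha> i) (J i))"
    if "\<alpha> \<in> Poly_Mapping.keys p" "J \<in> ?PI" for \<alpha> J
    using that deg by (simp add: bernstein_coeff_eq_choose_mult_falling_ratio prod.distrib PiE_iff)
  have "p = (\<Sum>\<alpha>\<in>Poly_Mapping.keys p. pconst (?c \<alpha>) * (\<Prod>i\<in>{1..r}. pvar i ^ Poly_Mapping.lookup \<alpha> i))"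
    by (rule poly_eq_sum_monomials[OF p])
  also have "\<dots> = (\<Sum>\<alpha>\<in>Poly_Mapping.keys p. \<Sum>J\<in>?PI. pconst (?c \<alpha> *
      ((\<Prod>i\<in>{1..r}. real (d choose J i)) * (\<Prod>i\<in>{1..r}. falling_ratio d (Poly_Mapping.lookup \<alpha> i) (J i))))
      * bernstein_poly r d J)"
  proof (intro sum.cong refl)
    fix \<alpha> assume \<alpha>: "\<alpha> \<in> Poly_Mapping.keys p"
    have "pconst (?c \<alpha>) * (\<Prod>i\<in>{1..r}. pvar i ^ Poly_Mapping.lookup \<alpha> i) = (\<Sum>J\<in>?PI.
        pconst (?c \<alpha> * (\<Prod>i\<in>{1..r}. real (bernstein_coeff d (Poly_Mapping.lookup \<alpha> i) (J i))))
        * bernstein_poly r d J)"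
      using prod_pvar_power_eq_bernstein_sum[of r "Poly_Mapping.lookup \<alpha>" d] deg[OF \<alpha>]
      by (simp add: sum_distrib_left pconst_mult mult.assoc)
    also have "\<dots> = (\<Sum>J\<in>?PI. pconst (?c \<alpha> *
      ((\<Prod>i\<in>{1..r}. real (d choose J i)) * (\<Prod>i\<in>{1..r}. falling_ratio d (Poly_Mapping.lookup \<alpha> i) (J i))))
      * bernstein_poly r d J)"
      using \<alpha> by (intro sum.cong refl) (simp only: coeff)
    finally show "pconst (?c \<alpha>) * (\<Prod>i\<in>{1..r}. pvar i ^ Poly_Mapping.lookup \<alpha> i) = \<dots>" .
  qed
  also have "\<dots> = (\<Sum>J\<in>?PI. pconst ((\<Prod>i\<in>{1..r}. real (d choose J i)) * bernstein_value r d p J)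
      * bernstein_poly r d J)"
    by (subst sum.swap)
      (simp add: bernstein_value_def sum_distrib_left sum_distrib_right pconst_sum mult_ac)
  finally show ?thesis .
qed

lemma abs_prod_falling_ratio_diff_le:
  assumes k: "\<And>i. i \<in> {1..r} \<Longrightarrow> k i \<le> D" and J: "\<And>i. i \<in> {1..r} \<Longrightarrow> J i \<le> d"
    and "D \<le> d" "0 < d"
  shows "\<bar>(\<Prod>i\<in>{1..r}. falling_ratio d (k i) (J i)) - (\<Prod>i\<in>{1..r}. (real (J i) / real d) ^ k i)\<bar>
      \<le> real r * real D ^ 2 / real d"
proof -
  have bounds: "0 \<le> falling_ratio d (k i) (J i) \<and> falling_ratio d (k i) (J i) \<le> (real (J i) / real d) ^ k i \<and>
      (real (J i) / real d) ^ k i - falling_ratio d (k i) (J i) \<le> real (k i) ^ 2 / real d"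
    and le1: "(real (J i) / real d) ^ k i \<le> 1"
    if i: "i \<in> {1..r}" for i
    using falling_ratio_bounds[of "k i" d "J i"] k[OF i] J[OF i] assms(3,4)
    by (auto intro: power_le_one)
  have "\<bar>(\<Prod>i\<in>{1..r}. falling_ratio d (k i) (J i)) - (\<Prod>i\<in>{1..r}. (real (J i) / real d) ^ k i)\<bar>
      \<le> (\<Sum>i\<in>{1..r}. \<bar>falling_ratio d (k i) (J i) - (real (J i) / real d) ^ k i\<bar>)"
    using bounds le1 by (intro abs_prod_diff_le_sum) fastforce
  also have "\<dots> \<le> (\<Sum>i\<in>{1..r}. real D ^ 2 / real d)"
  proof (intro sum_mono)
    fix i assume i: "i \<in> {1..r}"
    have "real (k i) ^ 2 / real d \<le> real D ^ 2 / real d"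
      using k[OF i] by (intro divide_right_mono power_mono) auto
    with bounds[OF i] show "\<bar>falling_ratio d (k i) (J i) - (real (J i) / real d) ^ k i\<bar> \<le> real D ^ 2 / real d"
      by linarith
  qed
  also have "\<dots> = real r * real D ^ 2 / real d"
    by simp
  finally show ?thesis .
qed

lemma bernstein_value_approx:
  assumes p: "in_poly_ring r p"
    and deg: "\<And>\<alpha> i. \<alpha> \<in> Poly_Mapping.keys p \<Longrightarrow> Poly_Mapping.lookup \<alpha> i \<le> D"
    and "D \<le> d" "0 < d"
    and J: "\<And>i. i \<in> {1..r} \<Longrightarrow> J i \<le> d"
    and y: "\<And>i. i \<in> {1..r} \<Longrightarrow> y i = real (J i) / real d"
  shows "\<bar>bernstein_value r d p J - peval y p\<bar>
      \<le> (\<Sum>\<alpha>\<in>Poly_Mapping.keys p. \<bar>Poly_Mapping.lookup p \<alpha>\<bar>) * (real r * real D ^ 2 / real d)"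
proof -
  let ?fr = "\<lambda>\<alpha>. \<Prod>i\<in>{1..r}. falling_ratio d (Poly_Mapping.lookup \<alpha> i) (J i)"
  let ?pw = "\<lambda>\<alpha>. \<Prod>i\<in>{1..r}. (real (J i) / real d) ^ Poly_Mapping.lookup \<alpha> i"
  have "monom_eval y \<alpha> = ?pw \<alpha>" if "\<alpha> \<in> Poly_Mapping.keys p" for \<alpha>
  proof -
    have "Poly_Mapping.keys \<alpha> \<subseteq> {1..r}"
      using that p by (simp add: in_poly_ring_def)
    then have "monom_eval y \<alpha> = (\<Prod>i\<in>{1..r}. y i ^ Poly_Mapping.lookup \<alpha> i)"
      by (simp add: monom_eval_superset)
    also have "\<dots> = ?pw \<alpha>"
      using y by (intro prod.cong) auto
    finally show ?thesis .
  qed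
  then have "peval y p = (\<Sum>\<alpha>\<in>Poly_Mapping.keys p. Poly_Mapping.lookup p \<alpha> * ?pw \<alpha>)"
    unfolding peval_def by (intro sum.cong) auto
  then have "\<bar>bernstein_value r d p J - peval y p\<bar> =
      \<bar>\<Sum>\<alpha>\<in>Poly_Mapping.keys p. Poly_Mapping.lookup p \<alpha> * (?fr \<alpha> - ?pw \<alpha>)\<bar>"
    unfolding bernstein_value_def right_diff_distrib sum_subtractf by simp
  also have "\<dots> \<le> (\<Sum>\<alpha>\<in>Poly_Mapping.keys p. \<bar>Poly_Mapping.lookup p \<alpha>\<bar> * \<bar>?fr \<alpha> - ?pw \<alpha>\<bar>)"
    by (rule order_trans[OF sum_abs]) (simp add: abs_mult)
  also have "\<dots> \<le> (\<Sum>\<alpha>\<in>Poly_Mapping.keys p. \<bar>Poly_Mapping.lookup p \<alpha>\<bar> * (real r * real D ^ 2 / real d))"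
  proof (intro sum_mono mult_left_mono)
    fix \<alpha> assume "\<alpha> \<in> Poly_Mapping.keys p"
    then show "\<bar>?fr \<alpha> - ?pw \<alpha>\<bar> \<le> real r * real D ^ 2 / real d"
      using deg J assms(3,4) by (intro abs_prod_falling_ratio_diff_le) auto
  qed simp
  finally show ?thesis
    by (simp only: sum_distrib_right)
qed

context box_preprime
begin

lemma bernstein_poly_mem: "bernstein_poly r d J \<in> S"
  unfolding bernstein_poly_def
  by (intro prod_mem mult_mem power_mem pvar_mem one_minus_pvar_mem)

text \<open>Bernstein's theorem: at a fine enough degree \<open>d\<close> the Bernstein coefficients of \<open>p\<close> are
  close to the values of \<open>p\<close> on the grid \<open>{0, 1/d, \<dots>, 1}\<^sup>r\<close>, hence positive.\<close>
theorem positive_on_unit_box_mem: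
  assumes p: "in_poly_ring r p" and m: "m > 0"
    and pos: "\<And>x. (\<And>i. 0 \<le> x i \<and> x i \<le> 1) \<Longrightarrow> m \<le> peval x p"
  shows "p \<in> S"
proof -
  obtain D where deg: "\<And>\<alpha> i. \<alpha> \<in> Poly_Mapping.keys p \<Longrightarrow> Poly_Mapping.lookup \<alpha> i \<le> D"
    using exponents_bounded by blast
  define L where "L = (\<Sum>\<alpha>\<in>Poly_Mapping.keys p. \<bar>Poly_Mapping.lookup p \<alpha>\<bar>)"
  obtain n :: nat where n: "L * real r * real D ^ 2 / m < real n"
    using reals_Archimedean2 by blast
  define d where "d = n + D + 1"
  have d: "D \<le> d" "0 < d"
    by (simp_all add: d_def)
  have "L * real r * real D ^ 2 < m * real n"
    using n m by (simp add: field_simps)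
  also have "\<dots> \<le> m * real d"
    using m by (intro mult_left_mono) (auto simp: d_def)
  finally have small: "L * (real r * real D ^ 2 / real d) < m"
    using d by (simp add: field_simps)
  have "bernstein_value r d p J > 0" if J: "J \<in> PiE {1..r} (\<lambda>_. {0..d})" for J
  proof -
    define y where "y i = (if i \<in> {1..r} then real (J i) / real d else 0)" for i
    have "\<And>i. 0 \<le> y i \<and> y i \<le> 1"
      using J d by (auto simp: y_def PiE_iff)
    then have "m \<le> peval y p"
      by (rule pos)
    moreover have "\<bar>bernstein_value r d p J - peval y p\<bar> \<le> L * (real r * real D ^ 2 / real d)"
      unfolding L_def using J d by (intro bernstein_value_approx p deg) (auto simp: y_def PiE_iff)
    ultimately show ?thesis
      using small by linarith
  qed
  then have "(\<Sum>J\<in>PiE {1..r} (\<lambda>_. {0..d}).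
      pconst ((\<Prod>i\<in>{1..r}. real (d choose J i)) * bernstein_value r d p J) * bernstein_poly r d J) \<in> S"
    by (intro sum_mem mult_mem pconst_mem bernstein_poly_mem mult_nonneg_nonneg prod_nonneg)
      (auto intro: less_imp_le)
  then show ?thesis
    using bernstein_expansion[OF p order_trans[OF deg d(1)]] by simp
qed

end

section \<open>Nonnegative polynomials plus an ideal\<close>

definition nonneg_plus_ideal :: "nat \<Rightarrow> ('a \<Rightarrow> rpoly) \<Rightarrow> 'a set \<Rightarrow> rpoly set" where
  "nonneg_plus_ideal r G I = {g + (\<Sum>C\<in>I. h C * G C) | g h.
      in_poly_ring r g \<and> nonneg_coeffs g \<and> (\<forall>C. in_poly_ring r (h C))}"

lemma nonneg_plus_ideal_add_ideal:
  assumes "t \<in> nonneg_plus_ideal r G I" "\<And>C. C \<in> I \<Longrightarrow> in_poly_ring r (k C)"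
  shows "t + (\<Sum>C\<in>I. k C * G C) \<in> nonneg_plus_ideal r G I"
proof -
  obtain g h where t: "t = g + (\<Sum>C\<in>I. h C * G C)"
    and g: "in_poly_ring r g" "nonneg_coeffs g" and h: "\<forall>C. in_poly_ring r (h C)"
    using assms(1) unfolding nonneg_plus_ideal_def by blast
  define h' where "h' C = h C + (if C \<in> I then k C else 0)" for C
  have "t + (\<Sum>C\<in>I. k C * G C) = g + (\<Sum>C\<in>I. h' C * G C)"
    by (simp add: t h'_def distrib_right sum.distrib add.assoc)
  moreover have "in_poly_ring r (h' C)" for C
    using h assms(2) by (simp add: h'_def in_poly_ring_add in_poly_ring_0)
  ultimately show ?thesis
    unfolding nonneg_plus_ideal_def using g by blast
qed

lemma nonneg_plus_ideal_add_nonneg: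
  assumes "t \<in> nonneg_plus_ideal r G I" "in_poly_ring r g" "nonneg_coeffs g"
  shows "g + t \<in> nonneg_plus_ideal r G I"
proof -
  obtain g' h where "t = g' + (\<Sum>C\<in>I. h C * G C)"
    and "in_poly_ring r g'" "nonneg_coeffs g'" "\<forall>C. in_poly_ring r (h C)"
    using assms(1) unfolding nonneg_plus_ideal_def by blast
  with assms(2,3) show ?thesis
    unfolding nonneg_plus_ideal_def
    by (auto simp: add.assoc intro!: exI[of _ "g + g'"] in_poly_ring_add nonneg_coeffs_add)
qed

lemma nonneg_mem_nonneg_plus_ideal:
  assumes "in_poly_ring r g" "nonneg_coeffs g"
  shows "g \<in> nonneg_plus_ideal r G I"
  using assms in_poly_ring_0 unfolding nonneg_plus_ideal_def by force

lemma nonneg_plus_ideal_subset_poly_ring: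
  assumes "\<And>C. C \<in> I \<Longrightarrow> in_poly_ring r (G C)" "t \<in> nonneg_plus_ideal r G I"
  shows "in_poly_ring r t"
  using assms unfolding nonneg_plus_ideal_def
  by (auto intro!: in_poly_ring_add in_poly_ring_sum in_poly_ring_mult)

lemma nonneg_plus_ideal_add:
  assumes "p \<in> nonneg_plus_ideal r G I" "q \<in> nonneg_plus_ideal r G I"
  shows "p + q \<in> nonneg_plus_ideal r G I"
proof -
  obtain g h where p: "p = g + (\<Sum>C\<in>I. h C * G C)"
    and "in_poly_ring r g" "nonneg_coeffs g" "\<forall>C. in_poly_ring r (h C)"
    using assms(1) unfolding nonneg_plus_ideal_def by blast
  then have "(g + q) + (\<Sum>C\<in>I. h C * G C) \<in> nonneg_plus_ideal r G I"
    using assms(2) by (intro nonneg_plus_ideal_add_ideal nonneg_plus_ideal_add_nonneg) auto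
  then show ?thesis
    by (simp add: p ac_simps)
qed

lemma nonneg_plus_ideal_mult:
  assumes G: "\<And>C. C \<in> I \<Longrightarrow> in_poly_ring r (G C)"
    and "p \<in> nonneg_plus_ideal r G I" "q \<in> nonneg_plus_ideal r G I"
  shows "p * q \<in> nonneg_plus_ideal r G I"
proof -
  obtain g h where p: "p = g + (\<Sum>C\<in>I. h C * G C)"
    and g: "in_poly_ring r g" "nonneg_coeffs g" and h: "\<forall>C. in_poly_ring r (h C)"
    using assms(2) unfolding nonneg_plus_ideal_def by blast
  obtain g' h' where q: "q = g' + (\<Sum>C\<in>I. h' C * G C)"
    and g': "in_poly_ring r g'" "nonneg_coeffs g'" and h': "\<forall>C. in_poly_ring r (h' C)"
    using assms(3) unfolding nonneg_plus_ideal_def by blast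
  have "p * q = g * g' + (\<Sum>C\<in>I. (g * h' C + h C * q) * G C)"
    by (simp add: p q algebra_simps sum.distrib sum_distrib_left sum_distrib_right)
  moreover have "g * g' + (\<Sum>C\<in>I. (g * h' C + h C * q) * G C) \<in> nonneg_plus_ideal r G I"
    using g g' h h' nonneg_plus_ideal_subset_poly_ring[OF G assms(3)]
    by (intro nonneg_plus_ideal_add_ideal nonneg_mem_nonneg_plus_ideal)
      (auto intro: in_poly_ring_mult in_poly_ring_add nonneg_coeffs_mult)
  ultimately show ?thesis
    by simp
qed

lemma box_preprime_nonneg_plus_ideal:
  assumes sub: "\<And>C. C \<in> I \<Longrightarrow> C \<subseteq> {1..r}" and cover: "\<Union>I = {1..r}"
  shows "box_preprime r (nonneg_plus_ideal r (\<lambda>C. 1 - (\<Sum>i\<in>C. pvar i)) I)"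
    (is "box_preprime r ?T")
proof
  have G: "in_poly_ring r (1 - (\<Sum>i\<in>C. pvar i))" if "C \<in> I" for C
    using sub[OF that] by (intro in_poly_ring_diff in_poly_ring_1 in_poly_ring_sum in_poly_ring_pvar) auto
  show "p + q \<in> ?T" if "p \<in> ?T" "q \<in> ?T" for p q
    using that by (rule nonneg_plus_ideal_add)
  show "p * q \<in> ?T" if "p \<in> ?T" "q \<in> ?T" for p q
    using G that by (rule nonneg_plus_ideal_mult)
  show "pconst c \<in> ?T" if "c \<ge> 0" for c
    using that by (intro nonneg_mem_nonneg_plus_ideal in_poly_ring_pconst)
      (auto simp: nonneg_coeffs_def pconst_def lookup_single when_def)
  show "pvar i \<in> ?T" if "i \<in> {1..r}" for i
    using that by (intro nonneg_mem_nonneg_plus_ideal in_poly_ring_pvar nonneg_coeffs_pvar)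
  show "1 - pvar i \<in> ?T" if "i \<in> {1..r}" for i
  proof -
    from that cover obtain C where C: "C \<in> I" "i \<in> C"
      by (metis UnionE)
    have "finite I"
      by (rule finite_subset[of I "Pow {1..r}"]) (use sub in auto)
    moreover have "finite C"
      using sub[OF C(1)] by (rule finite_subset) simp
    ultimately have fin: "finite I" "finite C" .
    let ?k = "\<lambda>C'. if C' = C then 1 else 0"
    have "(\<Sum>C'\<in>I. ?k C' * (1 - (\<Sum>l\<in>C'. pvar l))) =
        (\<Sum>C'\<in>I. if C' = C then 1 - (\<Sum>l\<in>C'. pvar l) else 0)"
      by (intro sum.cong) auto
    also have "\<dots> = 1 - (\<Sum>l\<in>C. pvar l)"
      using C(1) fin(1) by simp
    finally have "(\<Sum>C'\<in>I. ?k C' * (1 - (\<Sum>l\<in>C'. pvar l))) = 1 - (\<Sum>l\<in>C. pvar l)" .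
    moreover have "(\<Sum>l\<in>C. pvar l) = pvar i + (\<Sum>l\<in>C - {i}. pvar l)"
      using fin(2) C(2) by (rule sum.remove)
    ultimately have "1 - pvar i = (\<Sum>l\<in>C - {i}. pvar l) + (\<Sum>C'\<in>I. ?k C' * (1 - (\<Sum>l\<in>C'. pvar l)))"
      by simp
    moreover have "(\<Sum>l\<in>C - {i}. pvar l) \<in> ?T"
      using sub[OF C(1)]
      by (intro nonneg_mem_nonneg_plus_ideal in_poly_ring_sum in_poly_ring_pvar nonneg_coeffs_sum
          nonneg_coeffs_pvar) auto
    moreover have "in_poly_ring r (?k C')" for C'
      by (simp add: in_poly_ring_0 in_poly_ring_1)
    ultimately show ?thesis
      by (simp add: nonneg_plus_ideal_add_ideal)
  qed
qed

section \<open>A penalty argument on a compact set\<close>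

lemma compact_unit_box: "compact {x :: nat \<Rightarrow> real. \<forall>i. 0 \<le> x i \<and> x i \<le> 1}"
proof -
  have "{x :: nat \<Rightarrow> real. \<forall>i. 0 \<le> x i \<and> x i \<le> 1} = PiE UNIV (\<lambda>_. {0..1})"
    by (auto simp: PiE_def extensional_def)
  moreover have "compactin (product_topology (\<lambda>i. euclidean) UNIV) (PiE UNIV (\<lambda>_::nat. {0..1::real}))"
    by (subst compactin_PiE) auto
  ultimately show ?thesis
    by (simp add: euclidean_product_topology)
qed

lemma continuous_on_peval: "continuous_on S (\<lambda>x. peval x p)"
proof -
  have "continuous_on S (\<lambda>x::nat \<Rightarrow> real. x i)" for i
    by (rule continuous_on_subset[OF continuous_on_product_coordinates]) auto
  then show ?thesis
    unfolding peval_def monom_eval_def by (intro continuous_intros)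
qed

text \<open>Take \<open>\<mu>\<close> so large that \<open>\<mu> q\<close> exceeds \<open>- min f\<close> on the compact set where \<open>f \<le> 0\<close>,
  on which \<open>q\<close> is bounded below by a positive constant.\<close>
lemma exists_penalty_positive:
  fixes f q :: "'a::t2_space \<Rightarrow> real"
  assumes B: "compact B" and cf: "continuous_on B f" and cq: "continuous_on B q"
    and q0: "\<And>x. x \<in> B \<Longrightarrow> q x \<ge> 0" and qf: "\<And>x. x \<in> B \<Longrightarrow> q x = 0 \<Longrightarrow> f x > 0"
  shows "\<exists>\<mu>\<ge>0. \<forall>x\<in>B. f x + \<mu> * q x > 0"
proof (cases "\<forall>x\<in>B. f x > 0")
  case True
  then show ?thesis
    by (intro exI[of _ 0]) auto
next
  case False
  define U where "U = {x\<in>B. f x \<le> 0}"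
  have "closed U"
    unfolding U_def using B compact_imp_closed
    by (intro continuous_on_closed_Collect_le cf continuous_on_const) auto
  then have "compact U"
    using B by (metis U_def Int_absorb1 compact_Int_closed mem_Collect_eq subsetI)
  moreover have "U \<noteq> {}"
    using False by (auto simp: U_def not_less)
  moreover have "continuous_on U q"
    using cq by (rule continuous_on_subset) (auto simp: U_def)
  ultimately obtain x0 where x0: "x0 \<in> U" "\<And>y. y \<in> U \<Longrightarrow> q x0 \<le> q y"
    by (metis continuous_attains_inf)
  have q_pos: "q x0 > 0"
    using x0(1) q0 qf unfolding U_def by force
  obtain x1 where x1: "\<And>y. y \<in> B \<Longrightarrow> f x1 \<le> f y"
    using continuous_attains_inf[OF B _ cf] \<open>U \<noteq> {}\<close> by (auto simp: U_def)
  define \<mu> where "\<mu> = (\<bar>f x1\<bar> + 1) / q x0"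
  have "f x + \<mu> * q x > 0" if x: "x \<in> B" for x
  proof (cases "x \<in> U")
    case True
    have "\<mu> * q x0 \<le> \<mu> * q x"
      using x0(2)[OF True] q_pos by (intro mult_left_mono) (auto simp: \<mu>_def)
    moreover have "\<mu> * q x0 = \<bar>f x1\<bar> + 1"
      using q_pos by (simp add: \<mu>_def)
    moreover have "f x1 \<le> f x"
      using x1[OF x] .
    ultimately show ?thesis
      by linarith
  next
    case False
    then have "f x > 0"
      using x by (auto simp: U_def)
    moreover have "\<mu> * q x \<ge> 0"
      using q0[OF x] q_pos by (simp add: \<mu>_def)
    ultimately show ?thesis
      by linarith
  qed
  with q_pos show ?thesis
    by (intro exI[of _ \<mu>]) (simp add: \<mu>_def)
qed

lemma exists_penalty_lower_bound:
  fixes f q :: "'a::t2_space \<Rightarrow> real"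
  assumes B: "compact B" and cf: "continuous_on B f" and cq: "continuous_on B q"
    and q0: "\<And>x. x \<in> B \<Longrightarrow> q x \<ge> 0" and qf: "\<And>x. x \<in> B \<Longrightarrow> q x = 0 \<Longrightarrow> f x > 0"
  shows "\<exists>\<mu>\<ge>0. \<exists>m>0. \<forall>x\<in>B. m \<le> f x + \<mu> * q x"
proof -
  obtain \<mu> where \<mu>: "\<mu> \<ge> 0" "\<forall>x\<in>B. f x + \<mu> * q x > 0"
    using exists_penalty_positive[OF assms] by blast
  show ?thesis
  proof (cases "B = {}")
    case False
    have "continuous_on B (\<lambda>x. f x + \<mu> * q x)"
      by (intro continuous_intros cf cq)
    then obtain x2 where "x2 \<in> B" "\<forall>y\<in>B. f x2 + \<mu> * q x2 \<le> f y + \<mu> * q y"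
      using continuous_attains_inf[OF B False] by blast
    with \<mu> show ?thesis
      by blast
  qed (use \<mu> zero_less_one in blast)
qed

text \<open>The penalty \<open>q = \<Sum>C\<in>I. (1 - \<Sum>i\<in>C. x_i)^2\<close> vanishes exactly where the relations hold, so
  \<open>f + \<mu> q\<close> is positive on the whole box and lies in the preprime by Bernstein's theorem;
  subtracting \<open>\<mu> q\<close> only changes the ideal part.\<close>
lemma nonneg_plus_ideal_positivstellensatz:
  assumes sub: "\<And>C. C \<in> I \<Longrightarrow> C \<subseteq> {1..r}" and cover: "\<Union>I = {1..r}" and f: "in_poly_ring r f"
    and pos: "\<And>x. (\<And>i. 0 \<le> x i \<and> x i \<le> 1) \<Longrightarrow> (\<And>C. C \<in> I \<Longrightarrow> (\<Sum>i\<in>C. x i) = 1) \<Longrightarrow> peval x f > 0"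
  shows "f \<in> nonneg_plus_ideal r (\<lambda>C. 1 - (\<Sum>i\<in>C. pvar i)) I"
proof -
  define s where "s C = 1 - (\<Sum>i\<in>C. pvar i)" for C
  define q where "q = (\<Sum>C\<in>I. s C * s C)"
  interpret box_preprime r "nonneg_plus_ideal r s I"
    unfolding s_def by (rule box_preprime_nonneg_plus_ideal[OF sub cover])
  have "finite I"
    by (rule finite_subset[of I "Pow {1..r}"]) (use sub in auto)
  have peval_q: "peval x q = (\<Sum>C\<in>I. (1 - (\<Sum>i\<in>C. x i))\<^sup>2)" for x
    by (simp add: q_def s_def peval_sum peval_mult peval_diff power2_eq_square)
  let ?B = "{x :: nat \<Rightarrow> real. \<forall>i. 0 \<le> x i \<and> x i \<le> 1}"
  have "\<exists>\<mu>\<ge>0. \<exists>m>0. \<forall>x\<in>?B. m \<le> peval x f + \<mu> * peval x q"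
  proof (rule exists_penalty_lower_bound[OF compact_unit_box continuous_on_peval continuous_on_peval])
    fix x assume "x \<in> ?B"
    show "0 \<le> peval x q"
      unfolding peval_q by (intro sum_nonneg) simp
    assume "peval x q = 0"
    with \<open>finite I\<close> have "(\<Sum>i\<in>C. x i) = 1" if "C \<in> I" for C
      using that unfolding peval_q by (subst (asm) sum_nonneg_eq_0_iff) auto
    with \<open>x \<in> ?B\<close> show "peval x f > 0"
      by (intro pos) auto
  qed
  then obtain \<mu> m where "m > 0" and bound: "\<forall>x\<in>?B. m \<le> peval x f + \<mu> * peval x q"
    by blast
  have "in_poly_ring r q"
    unfolding q_def s_def
    by (intro in_poly_ring_sum in_poly_ring_mult in_poly_ring_diff in_poly_ring_1 in_poly_ring_pvar)
      (auto dest!: sub)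
  then have "f + pconst \<mu> * q \<in> nonneg_plus_ideal r s I"
    using \<open>m > 0\<close> bound
    by (intro positive_on_unit_box_mem in_poly_ring_add in_poly_ring_mult in_poly_ring_pconst f)
      (auto simp: peval_add peval_mult)
  then have "(f + pconst \<mu> * q) + (\<Sum>C\<in>I. (- pconst \<mu> * s C) * s C) \<in> nonneg_plus_ideal r s I"
    unfolding s_def
    by (intro nonneg_plus_ideal_add_ideal in_poly_ring_mult in_poly_ring_diff in_poly_ring_uminus
        in_poly_ring_1 in_poly_ring_pconst in_poly_ring_sum in_poly_ring_pvar) (auto dest!: sub)
  then have "f \<in> nonneg_plus_ideal r s I"
    by (simp add: q_def sum_distrib_left mult.assoc sum_negf)
  then show ?thesis
    by (simp add: s_def[abs_def])
qed

section \<open>Positivity of the Cox polynomial on the unit box\<close>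

definition cox_exponent :: "(int ^ 'n) set \<Rightarrow> (nat \<Rightarrow> int ^ 'n) \<Rightarrow> int ^ 'n \<Rightarrow> nat \<Rightarrow> nat" where
  "cox_exponent A F a i = nat (idot (F i) a + offset A F i)"

lemma of_nat_cox_exponent:
  assumes "finite A" "a \<in> A"
  shows "int (cox_exponent A F a i) = idot (F i) a + offset A F i"
proof -
  have "Min ((\<lambda>a. idot (F i) a) ` A) \<le> idot (F i) a"
    using assms by (intro Min_le) auto
  then show ?thesis
    by (simp add: cox_exponent_def offset_def)
qed

lemma cox_poly_eq: "cox_poly A r F c =
    (\<Sum>a\<in>A. Poly_Mapping.single (\<Sum>i\<in>{1..r}. Poly_Mapping.single i (cox_exponent A F a i)) (c a))"
  by (simp add: cox_poly_def cox_exponent_def)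

lemma keys_sum_single_subset:
  "Poly_Mapping.keys (\<Sum>i\<in>{1..r}. Poly_Mapping.single i (k i :: nat)) \<subseteq> {1..r}"
proof -
  have "Poly_Mapping.keys (\<Sum>i\<in>{1..r}. Poly_Mapping.single i (k i)) \<subseteq>
      (\<Union>i\<in>{1..r}. Poly_Mapping.keys (Poly_Mapping.single i (k i)))"
    by (rule keys_sum)
  also have "\<dots> \<subseteq> {1..r}"
    by auto
  finally show ?thesis .
qed

lemma in_poly_ring_cox_poly: "in_poly_ring r (cox_poly A r F c)"
  unfolding cox_poly_eq
  by (intro in_poly_ring_sum in_poly_ring_single keys_sum_single_subset)

lemma peval_cox_poly:
  "peval x (cox_poly A r F c) = (\<Sum>a\<in>A. c a * (\<Prod>i\<in>{1..r}. x i ^ cox_exponent A F a i))"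
proof -
  have "monom_eval x (\<Sum>i\<in>{1..r}. Poly_Mapping.single i (k i)) = (\<Prod>i\<in>{1..r}. x i ^ k i)" for k
    by (subst monom_eval_superset[OF _ keys_sum_single_subset]) (simp_all add: lookup_sum_single)
  then show ?thesis
    by (simp add: cox_poly_eq peval_sum peval_single)
qed

lemma power_int_sum: "(x::real) \<noteq> 0 \<Longrightarrow> x powi (\<Sum>i\<in>I. f i) = (\<Prod>i\<in>I. x powi f i)"
  by (induction I rule: infinite_finite_induct) (auto simp: power_int_add)

lemma prod_power_int: "(\<Prod>i\<in>I. f i :: real) powi n = (\<Prod>i\<in>I. f i powi n)"
  by (induction I rule: infinite_finite_induct) (auto simp: power_int_mult_distrib)

text \<open>On the positive orthant the Cox polynomial is the Laurent polynomial pulled back along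
  \<open>t\<^sub>j = \<Prod>\<^sub>i x\<^sub>i\<^bsup>F\<^sub>i\<^sub>j\<^esup>\<close>, times the monomial \<open>x\<^sup>b\<close>.\<close>
lemma cox_eval_eq_laurent_eval:
  fixes A :: "(int ^ 'n) set"
  assumes A: "finite A" and x: "\<And>i. x i > 0"
  shows "(\<Sum>a\<in>A. d a * (\<Prod>i\<in>{1..r}. x i ^ cox_exponent A F a i)) =
    (\<Prod>i\<in>{1..r}. x i powi offset A F i) * laurent_eval A d (\<chi> j. \<Prod>i\<in>{1..r}. x i powi (F i $ j))"
proof -
  have nz: "x i \<noteq> 0" for i
    using x[of i] by simp
  have "(\<Prod>i\<in>{1..r}. x i ^ cox_exponent A F a i) =
      (\<Prod>j\<in>UNIV. (\<Prod>i\<in>{1..r}. x i powi (F i $ j)) powi (a $ j)) * (\<Prod>i\<in>{1..r}. x i powi offset A F i)"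
    if a: "a \<in> A" for a
  proof -
    have "(\<Prod>i\<in>{1..r}. x i ^ cox_exponent A F a i) = (\<Prod>i\<in>{1..r}. x i powi (idot (F i) a + offset A F i))"
      by (simp add: of_nat_cox_exponent[OF A a, symmetric])
    also have "\<dots> = (\<Prod>i\<in>{1..r}. \<Prod>j\<in>UNIV. (x i powi (F i $ j)) powi (a $ j)) * (\<Prod>i\<in>{1..r}. x i powi offset A F i)"
      by (simp add: power_int_add nz prod.distrib idot_def power_int_sum power_int_mult)
    also have "(\<Prod>i\<in>{1..r}. \<Prod>j\<in>UNIV. (x i powi (F i $ j)) powi (a $ j)) =
        (\<Prod>j\<in>UNIV. (\<Prod>i\<in>{1..r}. x i powi (F i $ j)) powi (a $ j))"
      by (subst prod.swap) (simp add: prod_power_int)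
    finally show ?thesis .
  qed
  then show ?thesis
    by (simp add: laurent_eval_def sum_distrib_left mult_ac)
qed

text \<open>Perturb \<open>c\<close> to \<open>c - \<delta>\<close>, which stays copositive, and \<open>x\<close> to \<open>x + s\<close> in the open orthant;
  letting \<open>s \<rightarrow> 0\<^sup>+\<close> the perturbed value stays \<open>\<ge> 0\<close>, and the vertex \<open>a\<^sub>0\<close> contributes a
  monomial that is positive at \<open>x\<close>.\<close>
lemma cox_eval_pos:
  fixes A :: "(int ^ 'n) set"
  assumes A: "finite A" and cop: "strictly_A_copositive A c" and x: "\<And>i. 0 \<le> x i"
    and a0: "a0 \<in> A" "\<And>i. i \<in> {1..r} \<Longrightarrow> x i = 0 \<Longrightarrow> cox_exponent A F a0 i = 0"
  shows "(\<Sum>a\<in>A. c a * (\<Prod>i\<in>{1..r}. x i ^ cox_exponent A F a i)) > 0"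
proof -
  obtain \<epsilon> where \<epsilon>: "\<epsilon> > 0" and nonneg: "\<And>d t. (\<forall>a\<in>A. \<bar>d a - c a\<bar> < \<epsilon>) \<Longrightarrow>
      (\<forall>j. t $ j > 0) \<Longrightarrow> laurent_eval A d t \<ge> 0"
    using cop unfolding strictly_A_copositive_def by blast
  define \<delta> where "\<delta> = \<epsilon> / 2"
  have \<delta>: "\<delta> > 0" "\<delta> < \<epsilon>"
    using \<epsilon> by (auto simp: \<delta>_def)
  define Y where "Y s a = (\<Prod>i\<in>{1..r}. (x i + s) ^ cox_exponent A F a i)" for s a
  define G where "G s = (\<Sum>a\<in>A. (c a - \<delta>) * Y s a)" for s
  have "G s \<ge> 0" if s: "s > 0" for s
  proof -
    have pos: "x i + s > 0" for i
      using x[of i] s by simp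
    have "G s = (\<Prod>i\<in>{1..r}. (x i + s) powi offset A F i) *
        laurent_eval A (\<lambda>a. c a - \<delta>) (\<chi> j. \<Prod>i\<in>{1..r}. (x i + s) powi (F i $ j))"
      unfolding G_def Y_def by (rule cox_eval_eq_laurent_eval[OF A pos])
    moreover have "(\<Prod>i\<in>{1..r}. (x i + s) powi offset A F i) > 0"
      using pos by (auto intro!: prod_pos)
    moreover have "laurent_eval A (\<lambda>a. c a - \<delta>) (\<chi> j. \<Prod>i\<in>{1..r}. (x i + s) powi (F i $ j)) \<ge> 0"
      using \<delta> pos by (intro nonneg) (auto intro!: prod_pos)
    ultimately show ?thesis
      by simp
  qed
  then have "eventually (\<lambda>s. 0 \<le> G s) (at_right 0)"
    using eventually_at_right_less[of "0::real"] by (auto elim: eventually_mono)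
  moreover have "continuous_on UNIV G"
    unfolding G_def Y_def by (intro continuous_intros)
  then have "(G \<longlongrightarrow> G 0) (at_right 0)"
    by (metis continuous_on_def tendsto_mono at_le UNIV_I subset_UNIV)
  ultimately have "0 \<le> G 0"
    using tendsto_lowerbound trivial_limit_at_right_real by blast
  moreover have "Y 0 a0 > 0"
    unfolding Y_def
  proof (intro prod_pos)
    fix i assume "i \<in> {1..r}"
    then show "0 < (x i + 0) ^ cox_exponent A F a0 i"
      using x[of i] a0(2)[of i] by (cases "x i = 0") auto
  qed
  moreover have "(\<Sum>a\<in>A. Y 0 a) \<ge> Y 0 a0"
    using A a0(1) x by (intro member_le_sum) (auto simp: Y_def intro!: prod_nonneg)
  moreover have "(\<Sum>a\<in>A. c a * Y 0 a) = G 0 + \<delta> * (\<Sum>a\<in>A. Y 0 a)"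
    by (simp add: G_def algebra_simps sum.distrib sum_distrib_left sum_subtractf)
  ultimately have "(\<Sum>a\<in>A. c a * Y 0 a) > 0"
    using \<delta>(1) by (smt (verit) mult_pos_pos)
  then show ?thesis
    by (simp add: Y_def)
qed

lemma exists_primitive_collection_subset:
  assumes Z: "Z \<subseteq> {1..r}" and not_cone: "\<not> rays_in_cone P F Z"
  shows "\<exists>C\<subseteq>Z. primitive_collection P r F C"
proof -
  define S where "S = {C. C \<subseteq> Z \<and> \<not> rays_in_cone P F C}"
  have "Z \<in> S"
    using not_cone by (simp add: S_def)
  then obtain C where C: "C \<in> S" and min: "\<And>C'. C' \<in> S \<Longrightarrow> card C \<le> card C'"
    using ex_has_least_nat[of "\<lambda>C. C \<in> S" Z card] by blast
  have CZ: "C \<subseteq> Z" and C_not_cone: "\<not> rays_in_cone P F C"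
    using C by (auto simp: S_def)
  have "finite C"
    using CZ Z finite_subset[OF _ finite_atLeastAtMost] by blast
  have "rays_in_cone P F C'" if C': "C' \<subset> C" for C'
  proof (rule ccontr)
    assume "\<not> rays_in_cone P F C'"
    with C' CZ have "card C \<le> card C'"
      by (intro min) (auto simp: S_def)
    with psubset_card_mono[OF \<open>finite C\<close> C'] show False
      by simp
  qed
  with CZ Z C_not_cone show ?thesis
    unfolding primitive_collection_def by blast
qed

lemma inner_rvec: "rvec u \<bullet> rvec v = real_of_int (idot u v)"
  by (simp add: inner_vec_def rvec_def idot_def)

lemma normal_fan_cone_vertex:
  assumes A: "finite A" and \<sigma>: "\<sigma> \<in> normal_fan (convex hull (rvec ` A))"
  shows "\<exists>a0\<in>A. \<forall>u\<in>\<sigma>. \<forall>a\<in>A. u \<bullet> rvec a0 \<le> u \<bullet> rvec a"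
proof -
  let ?P = "convex hull (rvec ` A)"
  obtain Fc where \<sigma>_eq: "\<sigma> = {u. \<forall>x\<in>Fc. \<forall>y\<in>?P. u \<bullet> x \<le> u \<bullet> y}" and Fc: "Fc face_of ?P" "Fc \<noteq> {}"
    using \<sigma> unfolding normal_fan_def by blast
  have "compact ?P"
    using A by (intro compact_convex_hull finite_imp_compact) simp
  then have "compact Fc"
    using face_of_imp_compact[OF convex_convex_hull _ Fc(1)] by blast
  then obtain v where "v extreme_point_of Fc"
    using extreme_point_exists_convex[OF _ face_of_imp_convex[OF Fc(1)] Fc(2)] by blast
  then have v: "v extreme_point_of ?P" "v \<in> Fc"
    using extreme_point_of_face[OF Fc(1)] by blast+
  obtain a0 where "a0 \<in> A" "v = rvec a0"
    using extreme_point_of_convex_hull[OF v(1)] by blast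
  moreover have "rvec a \<in> ?P" if "a \<in> A" for a
    using that by (simp add: hull_inc)
  ultimately show ?thesis
    using v(2) unfolding \<sigma>_eq by blast
qed

lemma exists_vertex_cox_exponent_zero:
  fixes A :: "(int ^ 'n) set" and x :: "nat \<Rightarrow> real"
  assumes A: "finite A"
    and relations: "\<And>C. primitive_collection (convex hull (rvec ` A)) r F C \<Longrightarrow> (\<Sum>i\<in>C. x i) = 1"
  shows "\<exists>a0\<in>A. \<forall>i\<in>{1..r}. x i = 0 \<longrightarrow> cox_exponent A F a0 i = 0"
proof -
  define Z where "Z = {i\<in>{1..r}. x i = 0}"
  have "rays_in_cone (convex hull (rvec ` A)) F Z"
  proof (rule ccontr)
    assume "\<not> rays_in_cone (convex hull (rvec ` A)) F Z"
    moreover have "Z \<subseteq> {1..r}"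
      by (auto simp: Z_def)
    ultimately obtain C where "C \<subseteq> Z" "primitive_collection (convex hull (rvec ` A)) r F C"
      using exists_primitive_collection_subset by blast
    moreover from \<open>C \<subseteq> Z\<close> have "(\<Sum>i\<in>C. x i) = 0"
      by (intro sum.neutral) (auto simp: Z_def)
    ultimately show False
      using relations by simp
  qed
  then obtain \<sigma> where \<sigma>: "\<sigma> \<in> normal_fan (convex hull (rvec ` A))" "\<forall>i\<in>Z. rvec (F i) \<in> \<sigma>"
    unfolding rays_in_cone_def by blast
  obtain a0 where a0: "a0 \<in> A" "\<forall>u\<in>\<sigma>. \<forall>a\<in>A. u \<bullet> rvec a0 \<le> u \<bullet> rvec a"
    using normal_fan_cone_vertex[OF A \<sigma>(1)] by blast
  have "cox_exponent A F a0 i = 0" if "i \<in> Z" for i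
  proof -
    have "rvec (F i) \<bullet> rvec a0 \<le> rvec (F i) \<bullet> rvec a" if "a \<in> A" for a
      using a0(2) \<sigma>(2) \<open>i \<in> Z\<close> that by blast
    then have "Min ((\<lambda>a. idot (F i) a) ` A) = idot (F i) a0"
      using A a0(1) by (intro Min_eqI) (auto simp: inner_rvec)
    then show ?thesis
      by (simp add: cox_exponent_def offset_def)
  qed
  with a0(1) show ?thesis
    unfolding Z_def by blast
qed

lemma peval_cox_poly_pos:
  fixes A :: "(int ^ 'n) set"
  assumes A: "finite A" and cop: "strictly_A_copositive A c" and x: "\<And>i. 0 \<le> x i"
    and relations: "\<And>C. primitive_collection (convex hull (rvec ` A)) r F C \<Longrightarrow> (\<Sum>i\<in>C. x i) = 1"
  shows "peval x (cox_poly A r F c) > 0"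
proof -
  obtain a0 where "a0 \<in> A" "\<forall>i\<in>{1..r}. x i = 0 \<longrightarrow> cox_exponent A F a0 i = 0"
    using exists_vertex_cox_exponent_zero[OF A relations] by blast
  then show ?thesis
    unfolding peval_cox_poly by (intro cox_eval_pos[OF A cop x]) auto
qed

theorem mainTheorem10:
  fixes A :: "(int ^ 'n) set" and r :: nat and F :: "nat \<Rightarrow> int ^ 'n"
  defines "P \<equiv> convex hull (rvec ` A)"
  defines "PC \<equiv> {C. primitive_collection P r F C}"
  defines "T \<equiv> {g + (\<Sum>C\<in>PC. h C * (1 - (\<Sum>i\<in>C. pvar i))) | g h.
              in_poly_ring r g \<and> nonneg_coeffs g \<and> (\<forall>C. in_poly_ring r (h C))}"
  assumes "finite A"
    and "aff_dim P = int CARD('n)"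
    and "bij_betw F {1..r} (ray_generators P)"
    and "\<Union>PC = {1..r}"
  shows "preprime T \<and> archimedean r T \<and>
    (\<forall>c. strictly_A_copositive A c \<longrightarrow>
       (\<exists>g h. in_poly_ring r g \<and> nonneg_coeffs g \<and> (\<forall>C\<in>PC. in_poly_ring r (h C)) \<and>
          cox_poly A r F c = g + (\<Sum>C\<in>PC. h C * (1 - (\<Sum>i\<in>C. pvar i)))))"
proof -
  have sub: "C \<subseteq> {1..r}" if "C \<in> PC" for C
    using that by (simp add: PC_def primitive_collection_def)
  have T_eq: "T = nonneg_plus_ideal r (\<lambda>C. 1 - (\<Sum>i\<in>C. pvar i)) PC"
    unfolding T_def nonneg_plus_ideal_def ..
  interpret box_preprime r T
    unfolding T_eq by (rule box_preprime_nonneg_plus_ideal[OF sub assms(7)])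
  have "cox_poly A r F c \<in> T" if "strictly_A_copositive A c" for c
    unfolding T_eq using sub assms(7) in_poly_ring_cox_poly
    by (rule nonneg_plus_ideal_positivstellensatz)
      (use peval_cox_poly_pos[OF assms(4) that] in \<open>auto simp: PC_def P_def\<close>)
  then show ?thesis
    using preprime archimedean unfolding T_def by blast
qed

end
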